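(* Let $V$ be a vector space over a field $F$ and $T:V\to V$ a (not necessarily linear) bijection. If $p(x)=\sum_{i=0}^m a_ix^i$ with $a_m\neq0$ is a vanishing polynomial of $T$, then the reciprocal polynomial $p^*(x)=\sum_{i=0}^m a_ix^{m-i}$ is a vanishing polynomial of $T^{-1}$. If $p_m$ is the minimal polynomial of $T$, then $p_m(0)\neq0$ and $p_m(0)^{-1}p_m^*$ is the minimal polynomial of $T^{-1}$.
   Context: For $T:V\to V$ (not necessarily linear), $T^0=I$, $T^i=T\circ T^{i-1}$, and $p(T)(v)=\sum a_iT^i(v)$ for $p(x)=\sum a_ix^i$. A vanishing polynomial of $T$ is a nonzero $p\in F[x]$ with $p(T)(v)=0$ for all $v\in V$; the minimal polynomial is the unique monic vanishing polynomial of least degree. *)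

theory Defs
  imports Main "HOL-Computational_Algebra.Polynomial"
begin

definition poly_app :: "('a::field \<Rightarrow> 'v::ab_group_add \<Rightarrow> 'v) \<Rightarrow> 'a poly \<Rightarrow> ('v \<Rightarrow> 'v) \<Rightarrow> 'v \<Rightarrow> 'v" where
  "poly_app scale p T v = (\<Sum>i\<le>degree p. scale (coeff p i) ((T ^^ i) v))"

definition vanishing_poly :: "('a::field \<Rightarrow> 'v::ab_group_add \<Rightarrow> 'v) \<Rightarrow> ('v \<Rightarrow> 'v) \<Rightarrow> 'a poly \<Rightarrow> bool" where
  "vanishing_poly scale T p \<longleftrightarrow> p \<noteq> 0 \<and> (\<forall>v. poly_app scale p T v = 0)"

definition minimal_poly :: "('a::field \<Rightarrow> 'v::ab_group_add \<Rightarrow> 'v) \<Rightarrow> ('v \<Rightarrow> 'v) \<Rightarrow> 'a poly \<Rightarrow> bool" where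
  "minimal_poly scale T p \<longleftrightarrow> lead_coeff p = 1 \<and> vanishing_poly scale T p \<and>
     (\<forall>q. vanishing_poly scale T q \<longrightarrow> degree p \<le> degree q)"

end

theory Submission
  imports Defs
begin

text \<open>If p(T) = 0 and deg p = m, then for S = T\<inverse> we have T^i (S^m v) = S^(m-i) v, so
  evaluating p(T) at S^m v is evaluating the reciprocal polynomial at S on v.
  A minimal polynomial has nonzero constant term: otherwise p = x q, and surjectivity of T
  makes q a vanishing polynomial of smaller degree. Reflection keeps the degree when the constant
  term is nonzero and never raises it, so reflecting in both directions shows that the normalised
  reciprocal of the minimal polynomial of T has least degree among those of T\<inverse>.\<close>

lemma funpow_cancel_le:
  assumes "\<And>x. T (S x) = x" and "j \<le> m"
  shows "(T ^^ j) ((S ^^ m) v) = (S ^^ (m - j)) v"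
  using assms(2)
proof (induction j arbitrary: m)
  case (Suc j)
  then obtain m' where "m = Suc m'" "j \<le> m'" by (cases m) auto
  moreover have "(T ^^ Suc j) ((S ^^ Suc m') v) = (T ^^ j) (T (S ((S ^^ m') v)))"
    by (metis comp_apply funpow.simps(2) funpow_Suc_right)
  ultimately show ?case using Suc.IH assms(1) by simp
qed simp

context vector_space
begin

lemma poly_app_eq_sum_atMost:
  assumes "degree p \<le> N"
  shows "poly_app scale p T v = (\<Sum>i\<le>N. scale (coeff p i) ((T ^^ i) v))"
  unfolding poly_app_def
  by (rule sum.mono_neutral_left) (use assms in \<open>auto simp: coeff_eq_0\<close>)

lemma poly_app_smult: "poly_app scale (smult c p) T v = scale c (poly_app scale p T v)"
  by (cases "c = 0") (simp_all add: poly_app_def scale_sum_right)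

lemma poly_app_pCons_0: "poly_app scale (pCons 0 q) T v = poly_app scale q T (T v)"
proof -
  have "poly_app scale (pCons 0 q) T v = (\<Sum>i\<le>Suc (degree q). scale (coeff (pCons 0 q) i) ((T ^^ i) v))"
    by (rule poly_app_eq_sum_atMost) (simp add: degree_pCons_le)
  also have "\<dots> = (\<Sum>i\<le>degree q. scale (coeff q i) ((T ^^ Suc i) v))"
    by (subst sum.atMost_Suc_shift) simp
  also have "\<dots> = poly_app scale q T (T v)"
    by (simp add: poly_app_def funpow_Suc_right del: funpow.simps)
  finally show ?thesis .
qed

lemma poly_app_reflect_poly:
  assumes "\<And>x. T (S x) = x"
  shows "poly_app scale (reflect_poly p) S v = poly_app scale p T ((S ^^ degree p) v)"
proof -
  define m where "m = degree p"
  have "poly_app scale (reflect_poly p) S v = (\<Sum>i\<le>m. scale (coeff (reflect_poly p) i) ((S ^^ i) v))"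
    by (rule poly_app_eq_sum_atMost) (simp add: m_def degree_reflect_poly_le)
  also have "\<dots> = (\<Sum>i\<le>m. scale (coeff p (m - i)) ((S ^^ i) v))"
    by (rule sum.cong) (auto simp: coeff_reflect_poly m_def)
  also have "\<dots> = (\<Sum>j\<le>m. scale (coeff p j) ((S ^^ (m - j)) v))"
    by (rule sum.reindex_bij_witness[where i="\<lambda>i. m - i" and j="\<lambda>i. m - i"]) auto
  also have "\<dots> = (\<Sum>j\<le>m. scale (coeff p j) ((T ^^ j) ((S ^^ m) v)))"
    by (rule sum.cong) (auto simp: funpow_cancel_le[where T=T and S=S, OF assms])
  finally show ?thesis by (simp add: poly_app_def m_def)
qed

lemma vanishing_poly_reflect_inv:
  assumes "surj T" and "vanishing_poly scale T p"
  shows "vanishing_poly scale (inv T) (reflect_poly p)"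
  using assms poly_app_reflect_poly[of T "inv T" p] surj_f_inv_f[OF assms(1)]
  by (simp add: vanishing_poly_def)

lemma vanishing_poly_smult:
  assumes "vanishing_poly scale T p" and "c \<noteq> 0"
  shows "vanishing_poly scale T (smult c p)"
  using assms by (simp add: vanishing_poly_def poly_app_smult)

lemma vanishing_poly_pCons_0:
  assumes "surj T" and "vanishing_poly scale T (pCons 0 q)"
  shows "vanishing_poly scale T q"
proof -
  have "poly_app scale q T w = 0" for w
    using assms poly_app_pCons_0[of q T "inv T w"] surj_f_inv_f[OF assms(1)]
    by (simp add: vanishing_poly_def)
  then show ?thesis using assms(2) by (simp add: vanishing_poly_def)
qed

lemma minimal_poly_coeff_0_nonzero:
  assumes "surj T" and "minimal_poly scale T p"
  shows "coeff p 0 \<noteq> 0"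
proof
  assume "coeff p 0 = 0"
  then obtain q where p: "p = pCons 0 q" by (cases p) auto
  with assms have "q \<noteq> 0" "vanishing_poly scale T q"
    using vanishing_poly_pCons_0 by (auto simp: minimal_poly_def vanishing_poly_def)
  with assms(2) p show False by (fastforce simp: minimal_poly_def)
qed

lemma minimal_poly_inv:
  assumes "bij T" and min: "minimal_poly scale T p"
  shows "minimal_poly scale (inv T) (smult (inverse (coeff p 0)) (reflect_poly p))"
    (is "minimal_poly scale (inv T) ?r")
proof -
  have c0: "coeff p 0 \<noteq> 0"
    using minimal_poly_coeff_0_nonzero[OF bij_is_surj] assms by blast
  have degree_r: "degree ?r = degree p" using c0 by simp
  have "lead_coeff ?r = 1" using c0 degree_r by (simp add: coeff_reflect_poly)
  moreover have "vanishing_poly scale (inv T) ?r"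
    using min c0 assms(1)
    by (simp add: minimal_poly_def bij_is_surj vanishing_poly_reflect_inv vanishing_poly_smult)
  moreover have "degree ?r \<le> degree q" if "vanishing_poly scale (inv T) q" for q
  proof -
    have "vanishing_poly scale T (reflect_poly q)"
      using vanishing_poly_reflect_inv[OF _ that] assms(1)
      by (simp add: bij_is_surj bij_imp_bij_inv inv_inv_eq)
    then have "degree p \<le> degree (reflect_poly q)" using min by (simp add: minimal_poly_def)
    then show ?thesis using degree_r degree_reflect_poly_le[of q] by simp
  qed
  ultimately show ?thesis by (simp add: minimal_poly_def)
qed

end

theorem mainTheorem16:
  fixes scale :: "'a::field \<Rightarrow> 'v::ab_group_add \<Rightarrow> 'v"
    and T :: "'v \<Rightarrow> 'v"
  assumes "vector_space scale"
    and "bij T"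
  shows "(\<forall>p. vanishing_poly scale T p \<longrightarrow> vanishing_poly scale (inv T) (reflect_poly p))
    \<and> (\<forall>pm. minimal_poly scale T pm \<longrightarrow>
          poly pm 0 \<noteq> 0 \<and>
          minimal_poly scale (inv T) (smult (inverse (poly pm 0)) (reflect_poly pm)))"
proof -
  interpret vector_space scale by fact
  have "surj T" using assms(2) by (rule bij_is_surj)
  then show ?thesis
    using assms(2) vanishing_poly_reflect_inv minimal_poly_coeff_0_nonzero minimal_poly_inv
    by (simp add: poly_0_coeff_0)
qed

end
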